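(* For every integer $n \ge 5$, $\gamma_R(P(n,2)) \ge \left\lceil \frac{8n}{7}\right\rceil$.
   Context: For integers $n \ge 3$ and $1 \le k < n/2$, the generalized Petersen graph $P(n,k)$ has vertex set $\{v_i, u_i : 0 \le i \le n-1\}$ and edge set $\{v_iv_{i+1},\ v_iu_i,\ u_iu_{i+k} : 0 \le i \le n-1\}$, with subscripts taken modulo $n$. A Roman domination function (RDF) of a graph $G$ is a function $f: V(G)\to\{0,1,2\}$ such that every vertex $u$ with $f(u)=0$ is adjacent to at least one vertex $v$ with $f(v)=2$. Its weight is $\sum_{u\in V(G)} f(u)$. The Roman domination number $\gamma_R(G)$ is the minimum weight of an RDF of $G$. *)

theory Defs
  imports Complex_Main
begin

text \<open>Vertices of the generalized Petersen graph P(n,k): outer vertices v_i and inner vertices u_i,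
  with indices i in {0..<n}.\<close>
datatype gp_vertex = V nat | U nat

definition gp_vertices :: "nat \<Rightarrow> gp_vertex set" where
  "gp_vertices n = V ` {0..<n} \<union> U ` {0..<n}"

definition gp_edges :: "nat \<Rightarrow> nat \<Rightarrow> (gp_vertex \<times> gp_vertex) set" where
  "gp_edges n k = (\<Union>i\<in>{0..<n}. {(V i, V ((i + 1) mod n)), (V i, U i), (U i, U ((i + k) mod n))})"

definition gp_adj :: "nat \<Rightarrow> nat \<Rightarrow> gp_vertex \<Rightarrow> gp_vertex \<Rightarrow> bool" where
  "gp_adj n k x y \<longleftrightarrow> (x, y) \<in> gp_edges n k \<or> (y, x) \<in> gp_edges n k"

text \<open>Roman domination function on a graph with vertex set VS and adjacency relation adj.
  Values are taken in {0,1,2}; outside VS the function is irrelevant and fixed to 0.\<close>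
definition is_rdf :: "'a set \<Rightarrow> ('a \<Rightarrow> 'a \<Rightarrow> bool) \<Rightarrow> ('a \<Rightarrow> nat) \<Rightarrow> bool" where
  "is_rdf VS adj f \<longleftrightarrow>
     (\<forall>x\<in>VS. f x \<le> 2) \<and> (\<forall>x. x \<notin> VS \<longrightarrow> f x = 0) \<and>
     (\<forall>x\<in>VS. f x = 0 \<longrightarrow> (\<exists>y\<in>VS. adj x y \<and> f y = 2))"

definition rdf_weight :: "'a set \<Rightarrow> ('a \<Rightarrow> nat) \<Rightarrow> nat" where
  "rdf_weight VS f = (\<Sum>x\<in>VS. f x)"

definition roman_domination_number :: "'a set \<Rightarrow> ('a \<Rightarrow> 'a \<Rightarrow> bool) \<Rightarrow> nat" where
  "roman_domination_number VS adj = (LEAST w. \<exists>f. is_rdf VS adj f \<and> rdf_weight VS f = w)"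

definition gamma_R_GP :: "nat \<Rightarrow> nat \<Rightarrow> nat" where
  "gamma_R_GP n k = roman_domination_number (gp_vertices n) (gp_adj n k)"

end

theory Submission
  imports Defs "HOL-Number_Theory.Cong"
begin

(* Cut P(n,2) into columns {v_j, u_j}; write a j = f(v_j), b j = f(u_j) for a Roman
   dominating function f, read n-periodically.  The Roman condition only relates columns
   at distance at most 2, so f unrolls into a "Roman strip": a pair of sequences obeying
   the local domination constraints of the infinite graph P(infinity,2).

   Scanning a strip from left to right, after column j+3 exactly three vertices can still
   be dominated by later columns: u_(j+2), u_(j+3) and v_(j+3).  Each gets a status in
   {0,1,2} (labelled 2 / labelled 1 or already dominated / labelled 0 and undominated),
   and a fixed table psi on the 27 status triples is a potential: adding a column of
   weight w changes it by at most 7w - 8 (checked by exhausting all cases).  For a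
   periodic strip the potential returns to its start after n columns, so summing over
   one period gives 0 <= 7 * weight - 8n. *)

definition status :: "nat \<Rightarrow> bool \<Rightarrow> nat" where
  "status x d = (if x = 2 then 2 else if x \<ge> 1 \<or> d then 1 else 0)"

lemma status_le_2: "status x d \<le> 2"
  by (simp add: status_def)

lemma status_eq_2_iff: "status x d = 2 \<longleftrightarrow> x = 2"
  by (simp add: status_def)

lemma status_ge_1_iff: "x \<le> 2 \<Longrightarrow> 1 \<le> status x d \<longleftrightarrow> 1 \<le> x \<or> d"
  by (auto simp: status_def)

text \<open>The potential of a frontier with statuses (u_(j+2), u_(j+3), v_(j+3)), as a table;
  its entries are tuned so that psi_step below holds.\<close>
definition psi :: "nat \<Rightarrow> nat \<Rightarrow> nat \<Rightarrow> int" where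
  "psi x y z = [[[-26, -19, 0], [-19, -12, -13], [0, -13, -6]],
                [[-19, -18, 0], [-16, -11, -10], [0, -7, 0]],
                [[-15, -8, 0], [-15, -8, -1], [0, -7, 0]]] ! x ! y ! z"

text \<open>From frontier (s1, s0, sv) a new column
  with labels a = f(v), b = f(u) is added; it must dominate the two vertices leaving the
  frontier (v by a, u by b).\<close>
lemma psi_step_cases:
  "\<forall>s1\<in>{0,1,2}. \<forall>s0\<in>{0,1,2}. \<forall>sv\<in>{0,1,2}. \<forall>a\<in>{0,1,2}. \<forall>b\<in>{0,1,2::nat}.
    (1 \<le> sv \<or> a = 2) \<longrightarrow> (1 \<le> s1 \<or> b = 2) \<longrightarrow>
    psi s0 (status b (a = 2 \<or> s1 = 2)) (status a (b = 2 \<or> sv = 2)) - psi s1 s0 sv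
      \<le> 7 * (int a + int b) - 8"
  by (simp add: psi_def status_def)

lemma psi_step:
  assumes "s1 \<le> 2" "s0 \<le> 2" "sv \<le> 2" "a \<le> 2" "b \<le> 2"
    and "1 \<le> sv \<or> a = 2" and "1 \<le> s1 \<or> b = 2"
  shows "psi s0 (status b (a = 2 \<or> s1 = 2)) (status a (b = 2 \<or> sv = 2)) - psi s1 s0 sv
           \<le> 7 * (int a + int b) - 8"
proof -
  have "x \<in> {0, 1, 2}" if "x \<le> 2" for x :: nat
    using that by auto
  then show ?thesis
    using psi_step_cases assms by blast
qed

text \<open>A labelling of the columns of the infinite graph P(infinity,2) (outer labels a, inner
  labels b) satisfying the Roman condition: values are at most 2, every outer vertex
  v_(j+1) labelled 0 has a neighbour v_j, v_(j+2), u_(j+1) labelled 2, and likewise every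
  inner vertex u_(j+2) labelled 0 has a neighbour u_j, u_(j+4), v_(j+2) labelled 2.\<close>
definition roman_strip :: "(nat \<Rightarrow> nat) \<Rightarrow> (nat \<Rightarrow> nat) \<Rightarrow> bool" where
  "roman_strip a b \<longleftrightarrow> (\<forall>j. a j \<le> 2 \<and> b j \<le> 2 \<and>
     (1 \<le> a (j + 1) \<or> b (j + 1) = 2 \<or> a j = 2 \<or> a (j + 2) = 2) \<and>
     (1 \<le> b (j + 2) \<or> a (j + 2) = 2 \<or> b j = 2 \<or> b (j + 4) = 2))"

definition strip_potential :: "(nat \<Rightarrow> nat) \<Rightarrow> (nat \<Rightarrow> nat) \<Rightarrow> nat \<Rightarrow> int" where
  "strip_potential a b j =
     psi (status (b (j + 2)) (a (j + 2) = 2 \<or> b j = 2))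
         (status (b (j + 3)) (a (j + 3) = 2 \<or> b (j + 1) = 2))
         (status (a (j + 3)) (b (j + 3) = 2 \<or> a (j + 2) = 2))"

text \<open>Scanning column j + 4 raises the potential by at most 7 times its weight minus 8:
  this is psi_step, the constraints of the strip guaranteeing that the two vertices
  leaving the frontier are dominated.\<close>
lemma strip_potential_step:
  assumes "roman_strip a b"
  shows "strip_potential a b (Suc j) - strip_potential a b j
           \<le> 7 * (int (a (j + 4)) + int (b (j + 4))) - 8"
proof -
  define s1 where "s1 = status (b (j + 2)) (a (j + 2) = 2 \<or> b j = 2)"
  define s0 where "s0 = status (b (j + 3)) (a (j + 3) = 2 \<or> b (j + 1) = 2)"
  define sv where "sv = status (a (j + 3)) (b (j + 3) = 2 \<or> a (j + 2) = 2)"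
  have bounds: "a i \<le> 2" "b i \<le> 2" for i
    using assms by (auto simp: roman_strip_def)
  have idx: "j + 2 + 1 = j + 3" "j + 2 + 2 = j + 4"
    and next_idx: "Suc j + 1 = j + 2" "Suc j + 2 = j + 3" "Suc j + 3 = j + 4"
    by simp_all
  have outer: "1 \<le> a (j + 3) \<or> b (j + 3) = 2 \<or> a (j + 2) = 2 \<or> a (j + 4) = 2"
    using assms unfolding roman_strip_def idx[symmetric] by blast
  have inner: "1 \<le> b (j + 2) \<or> a (j + 2) = 2 \<or> b j = 2 \<or> b (j + 4) = 2"
    using assms unfolding roman_strip_def by blast
  have sv_dom: "1 \<le> sv \<or> a (j + 4) = 2"
    using outer status_ge_1_iff[OF bounds(1)] unfolding sv_def by blast
  have s1_dom: "1 \<le> s1 \<or> b (j + 4) = 2"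
    using inner status_ge_1_iff[OF bounds(2)] unfolding s1_def by blast
  have "s1 \<le> 2" "s0 \<le> 2" "sv \<le> 2"
    unfolding s1_def s0_def sv_def by (rule status_le_2)+
  note step = psi_step[OF this bounds(1) bounds(2) sv_dom s1_dom]
  have "strip_potential a b j = psi s1 s0 sv"
    by (simp add: strip_potential_def s1_def s0_def sv_def)
  moreover have "strip_potential a b (Suc j) =
      psi s0 (status (b (j + 4)) (a (j + 4) = 2 \<or> s1 = 2))
             (status (a (j + 4)) (b (j + 4) = 2 \<or> sv = 2))"
    unfolding strip_potential_def s1_def s0_def sv_def status_eq_2_iff next_idx by simp
  ultimately show ?thesis
    using step by simp
qed

lemma periodic_sum_shift:
  fixes g :: "nat \<Rightarrow> 'a :: ab_group_add"
  assumes periodic: "\<And>j. g (j + n) = g j"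
  shows "(\<Sum>j<n. g (j + k)) = (\<Sum>j<n. g j)"
proof (induction k)
  case (Suc k)
  have "(\<Sum>j<n. g (Suc j + k) - g (j + k)) = g (n + k) - g (0 + k)"
    by (rule sum_lessThan_telescope)
  also have "\<dots> = 0"
    using periodic[of k] by (simp add: add.commute)
  finally show ?case
    using Suc by (simp add: sum_subtractf)
qed simp

text \<open>Averaging over one period: an n-periodic Roman strip has weight at least 8n/7 per
  period, since the potential returns to its initial value after n steps.\<close>
lemma periodic_strip_weight:
  assumes strip: "roman_strip a b"
    and periodic: "\<And>j. a (j + n) = a j" "\<And>j. b (j + n) = b j"
  shows "8 * int n \<le> 7 * (\<Sum>j<n. int (a j) + int (b j))"
proof -
  let ?\<Phi> = "strip_potential a b"
  have shift: "a (n + i) = a i" "b (n + i) = b i" for i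
    using periodic[of i] by (simp_all add: add.commute)
  have "?\<Phi> n = ?\<Phi> 0"
    using shift[of 0] unfolding strip_potential_def by (simp only: shift add_0_left add_0_right)
  then have "0 = (\<Sum>j<n. ?\<Phi> (Suc j) - ?\<Phi> j)"
    by (simp add: sum_lessThan_telescope)
  also have "\<dots> \<le> (\<Sum>j<n. 7 * (int (a (j + 4)) + int (b (j + 4))) - 8)"
    by (intro sum_mono strip_potential_step[OF strip])
  also have "\<dots> = 7 * (\<Sum>j<n. int (a (j + 4)) + int (b (j + 4))) - 8 * int n"
    by (simp add: sum_subtractf sum_distrib_left)
  also have "(\<Sum>j<n. int (a (j + 4)) + int (b (j + 4))) = (\<Sum>j<n. int (a j) + int (b j))"
    by (rule periodic_sum_shift) (simp add: periodic)
  finally show ?thesis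
    by simp
qed

text \<open>Neighbourhoods in P(n,k), indexed so that no subtraction modulo n is needed:
  v_(j+1) is adjacent only to v_j, v_(j+2), u_(j+1), and u_(j+k) only to u_j, u_(j+2k),
  v_(j+k).  The predecessor is identified by cancelling a summand in a congruence.\<close>
lemma outer_neighbours:
  assumes "gp_adj n k (V ((j + 1) mod n)) y" "0 < n"
  shows "y \<in> {V (j mod n), V ((j + 2) mod n), U ((j + 1) mod n)}"
proof -
  have pred: "m = j mod n" if "m < n" "(m + 1) mod n = (j + 1) mod n" for m
    using that cong_add_rcancel_nat[of m 1 j n] by (simp add: cong_def)
  have "((j + 1) mod n + 1) mod n = (j + 2) mod n"
    by (simp add: mod_Suc_eq)
  with assms show ?thesis
    by (auto simp: gp_adj_def gp_edges_def pred)
qed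

lemma inner_neighbours:
  assumes "gp_adj n k (U ((j + k) mod n)) y" "0 < n"
  shows "y \<in> {U (j mod n), U ((j + 2 * k) mod n), V ((j + k) mod n)}"
proof -
  have pred: "m = j mod n" if "m < n" "(m + k) mod n = (j + k) mod n" for m
    using that cong_add_rcancel_nat[of m k j n] by (simp add: cong_def)
  have "((j + k) mod n + k) mod n = (j + 2 * k) mod n"
    by (simp add: mod_add_left_eq add.assoc mult_2)
  with assms show ?thesis
    by (auto simp: gp_adj_def gp_edges_def pred)
qed

lemma rdf_dominated:
  assumes "is_rdf VS adj f" "x \<in> VS" "f x = 0"
  obtains y where "adj x y" "f y = 2"
  using assms unfolding is_rdf_def by blast

lemma rdf_unrolls_to_strip:
  assumes rdf: "is_rdf (gp_vertices n) (gp_adj n 2) f" and "0 < n"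
  shows "roman_strip (\<lambda>j. f (V (j mod n))) (\<lambda>j. f (U (j mod n)))"
  unfolding roman_strip_def
proof (intro allI conjI)
  fix j
  have in_VS: "V (i mod n) \<in> gp_vertices n" "U (i mod n) \<in> gp_vertices n" for i
    using \<open>0 < n\<close> by (auto simp: gp_vertices_def)
  show "f (V (j mod n)) \<le> 2" "f (U (j mod n)) \<le> 2"
    using rdf in_VS unfolding is_rdf_def by blast+
  show "1 \<le> f (V ((j + 1) mod n)) \<or> f (U ((j + 1) mod n)) = 2 \<or>
        f (V (j mod n)) = 2 \<or> f (V ((j + 2) mod n)) = 2"
  proof (cases "f (V ((j + 1) mod n)) = 0")
    case True
    then obtain y where y: "gp_adj n 2 (V ((j + 1) mod n)) y" "f y = 2"
      using rdf_dominated[OF rdf in_VS(1)] by blast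
    with outer_neighbours[OF y(1) \<open>0 < n\<close>] show ?thesis
      by auto
  qed simp
  show "1 \<le> f (U ((j + 2) mod n)) \<or> f (V ((j + 2) mod n)) = 2 \<or>
        f (U (j mod n)) = 2 \<or> f (U ((j + 4) mod n)) = 2"
  proof (cases "f (U ((j + 2) mod n)) = 0")
    case True
    then obtain y where y: "gp_adj n 2 (U ((j + 2) mod n)) y" "f y = 2"
      using rdf_dominated[OF rdf in_VS(2)] by blast
    with inner_neighbours[OF y(1) \<open>0 < n\<close>] show ?thesis
      by auto
  qed simp
qed

lemma rdf_weight_columns:
  "rdf_weight (gp_vertices n) f = (\<Sum>j<n. f (V j) + f (U j))"
proof -
  have "rdf_weight (gp_vertices n) f = sum f (V ` {0..<n}) + sum f (U ` {0..<n})"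
    unfolding rdf_weight_def gp_vertices_def
    by (rule sum.union_disjoint) auto
  also have "\<dots> = (\<Sum>j<n. f (V j)) + (\<Sum>j<n. f (U j))"
    by (simp add: sum.reindex inj_on_def lessThan_atLeast0)
  finally show ?thesis
    by (simp add: sum.distrib)
qed

lemma rdf_weight_lower_bound:
  assumes "is_rdf (gp_vertices n) (gp_adj n 2) f" "0 < n"
  shows "8 * int n \<le> 7 * int (rdf_weight (gp_vertices n) f)"
proof -
  have "8 * int n \<le> 7 * (\<Sum>j<n. int (f (V (j mod n))) + int (f (U (j mod n))))"
    by (rule periodic_strip_weight[OF rdf_unrolls_to_strip[OF assms]]) simp_all
  also have "(\<Sum>j<n. int (f (V (j mod n))) + int (f (U (j mod n)))) =
             int (rdf_weight (gp_vertices n) f)"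
    by (simp add: rdf_weight_columns)
  finally show ?thesis .
qed

text \<open>The Roman domination number is attained: labelling every vertex 1 is a Roman
  dominating function, so the defining LEAST ranges over a nonempty set.\<close>
lemma roman_domination_number_attained:
  obtains f where "is_rdf VS adj f" "rdf_weight VS f = roman_domination_number VS adj"
proof -
  have "is_rdf VS adj (\<lambda>x. if x \<in> VS then 1 else 0)"
    by (simp add: is_rdf_def)
  then have "\<exists>w f. is_rdf VS adj f \<and> rdf_weight VS f = w"
    by blast
  from LeastI_ex[OF this] show ?thesis
    using that unfolding roman_domination_number_def by blast
qed

theorem lemma2p11:
  fixes n :: nat
  assumes "n \<ge> 5"
  shows "gamma_R_GP n 2 \<ge> nat \<lceil>(8 * real n) / 7\<rceil>"
proof -
  obtain f where f: "is_rdf (gp_vertices n) (gp_adj n 2) f"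
      "rdf_weight (gp_vertices n) f = gamma_R_GP n 2"
    using roman_domination_number_attained unfolding gamma_R_GP_def by blast
  have "8 * int n \<le> 7 * int (gamma_R_GP n 2)"
    using rdf_weight_lower_bound[OF f(1)] assms f(2) by simp
  then have "(8 * real n) / 7 \<le> real (gamma_R_GP n 2)"
    by linarith
  then show ?thesis
    by (simp add: ceiling_le_iff nat_le_iff)
qed

end
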